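(* Assume (A1)–(A3), $P^\star\in\Pi_{K^\star}\setminus\Pi_{K^\star-1}$ with $K^\star<\infty$, that for every $\theta\in\Theta_\infty$, $H(P_\theta|P^\star)<\infty$ and $p_\theta\ell_\theta\in L^1(\mu)$, that $\{\ell_\theta:\theta\in\Theta_\infty\}\subset\mathcal L_\tau(P^\star)$, and that for every $K$, $P^\star\notin\Pi_K$ implies $H(P^\star|\Pi_{K+1})<H(P^\star|\Pi_K)$. Then for every $K<K^\star$, $\Pi_K\subset\Lambda_{0,K}\cap\Gamma_{0,K}$ and $P^\star\notin\Lambda_{0,K}\cup\Gamma_{0,K}$.
   Context: $(\mathcal Z,\mathcal F)$ is Polish with $\sigma$-finite $\mu$; $P^\star\ll\mu$ is a probability on $\mathcal Z$ with $\ell^\star=\log(dP^\star/d\mu)$. $\{(\Theta_K,d)\}$ is a nested sequence of metric spaces, $\Theta_\infty=\bigcup_K\Theta_K$; $P_\theta$ has density $p_\theta$ w.r.t. $\mu$, $\ell_\theta=\log p_\theta$, $\Pi_K=\{P_\theta:\theta\in\Theta_K\}$, $\Pi_0=\emptyset$, $K^\star=\min\{K:P^\star\in\Pi_K\}$. $H(P|Q)=\int\log(dP/dQ)\,dP$ if $P\ll Q$, $+\infty$ otherwise; $H(P|\Pi)=\inf_{Q\in\Pi}H(P|Q)$. (A1) each $(\Theta_K,d)$ compact and each $\Pi_K$ weakly compact; (A2) $\theta\mapsto\ell_\theta(z)$ continuous on each $\Theta_K$; (A3) there are $l,u$ with $u-l\in L^1(P^\star)$, $l\le\ell^\star\le u$,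 $l\le\ell_\theta\le u$ for all $\theta\in\Theta_\infty$. $\tau(s)=e^{|s|}-|s|-1$; $\mathcal L_\tau(P^\star)=\{f:\exists a>0,\ P^\star\tau(f/a)<\infty\}$, a Banach space for $\|f\|_\tau=\inf\{a>0:P^\star\tau(f/a)\le1\}$, with topological dual $\mathcal L'_\tau(P^\star)$ (each $P_\theta$, $\theta\in\Theta_{K^\star-1}$, is regarded as the element $f\mapsto\int f\,dP_\theta$). $\mathcal P=\{p^{-1}\sum_{i=1}^p\delta_{z_i}:p\ge1,z_i\in\mathcal Z\}$. $\mathcal Q=\{Q\in\mathcal L'_\tau(P^\star):Q\ge0,\ Q1=1\}\cup\mathcal P$. For $\alpha\ge0$, $K\ge1$: $\Lambda_{\alpha,K}=\{Q\in\mathcal Q:\sup_{\theta\in\Theta_K}Q\ell_\theta-\sup_{\theta\in\Theta_{K+1}}Q\ell_\theta\ge-\alpha\}$, $\Gamma_{\alpha,K}=\{Q\in\mathcal Q:\sup_{\theta\in\Theta_K}Q\ell_\theta-\sup_{\theta\in\Theta_{K^\star}}Q\ell_\theta\ge-\alpha\}$. *)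

theory Defs
  imports "HOL-Probability.Probability"
begin

text \<open>For P << Q it is the integral of log(dP/dQ) w.r.t. P,
understood as (positive part) - (negative part).\<close>
definition rel_entropy :: "'a measure \<Rightarrow> 'a measure \<Rightarrow> ereal" where
  "rel_entropy P Q =
     (if sets P = sets Q \<and> absolutely_continuous Q P then
        enn2ereal (\<integral>\<^sup>+ x. ennreal (ln (enn2real (RN_deriv Q P x))) \<partial>P)
        - enn2ereal (\<integral>\<^sup>+ x. ennreal (- ln (enn2real (RN_deriv Q P x))) \<partial>P)
      else \<infinity>)"

text \<open>H(P|Ms) = inf over Q in Ms of H(P|Q) (= +oo for empty Ms).\<close>
definition rel_entropy_set :: "'a measure \<Rightarrow> 'a measure set \<Rightarrow> ereal" where
  "rel_entropy_set P Ms = (INF Q\<in>Ms. rel_entropy P Q)"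

definition model :: "'a measure \<Rightarrow> ('t \<Rightarrow> 'a \<Rightarrow> real) \<Rightarrow> 't \<Rightarrow> 'a measure" where
  "model \<mu> ell \<theta> = density \<mu> (\<lambda>z. ennreal (exp (ell \<theta> z)))"

definition model_class :: "'a measure \<Rightarrow> ('t \<Rightarrow> 'a \<Rightarrow> real) \<Rightarrow> 't set \<Rightarrow> 'a measure set" where
  "model_class \<mu> ell \<Theta> = model \<mu> ell ` \<Theta>"

definition weak_conv :: "(nat \<Rightarrow> 'a::topological_space measure) \<Rightarrow> 'a measure \<Rightarrow> bool" where
  "weak_conv Ps P \<longleftrightarrow> (\<forall>f. continuous_on UNIV f \<and> bounded (range f) \<longrightarrow>
       (\<lambda>n. \<integral>z. (f z::real) \<partial>(Ps n)) \<longlonglongrightarrow> (\<integral>z. f z \<partial>P))"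

text \<open>Weak compactness of a set of probability measures on a Polish space (the weak topology
is metrizable there, so this is sequential compactness).\<close>
definition weakly_compact :: "'a::topological_space measure set \<Rightarrow> bool" where
  "weakly_compact Ms \<longleftrightarrow> (\<forall>Ps. (\<forall>n. Ps n \<in> Ms) \<longrightarrow>
       (\<exists>(r::nat \<Rightarrow> nat) P. strict_mono r \<and> P \<in> Ms \<and> weak_conv (Ps \<circ> r) P))"

definition tau :: "real \<Rightarrow> real" where
  "tau s = exp \<bar>s\<bar> - \<bar>s\<bar> - 1"

definition orlicz :: "'a measure \<Rightarrow> ('a \<Rightarrow> real) set" where
  "orlicz P = {f. f \<in> borel_measurable P \<and>
      (\<exists>a>0. (\<integral>\<^sup>+ z. ennreal (tau (f z / a)) \<partial>P) < \<infinity>)}"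

definition orlicz_norm :: "'a measure \<Rightarrow> ('a \<Rightarrow> real) \<Rightarrow> real" where
  "orlicz_norm P f = Inf {a. a > 0 \<and> (\<integral>\<^sup>+ z. ennreal (tau (f z / a)) \<partial>P) \<le> 1}"

text \<open>Two functionals agreeing on L_tau(P) are the same element;
values outside L_tau(P) are irrelevant.\<close>
definition orlicz_dual :: "'a measure \<Rightarrow> (('a \<Rightarrow> real) \<Rightarrow> real) set" where
  "orlicz_dual P = {Q.
      (\<forall>f\<in>orlicz P. \<forall>g\<in>orlicz P. \<forall>a b. Q (\<lambda>z. a * f z + b * g z) = a * Q f + b * Q g) \<and>
      (\<exists>C. \<forall>f\<in>orlicz P. \<bar>Q f\<bar> \<le> C * orlicz_norm P f)}"

text \<open>Empirical measures p^{-1} sum delta_{z_i}, viewed as functionals.\<close>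
definition empirical :: "(('a \<Rightarrow> real) \<Rightarrow> real) set" where
  "empirical = {Q. \<exists>(p::nat) zs. p \<ge> 1 \<and> Q = (\<lambda>f. (\<Sum>i<p. f (zs i)) / real p)}"

definition Qset :: "'a measure \<Rightarrow> (('a \<Rightarrow> real) \<Rightarrow> real) set" where
  "Qset P = {Q \<in> orlicz_dual P.
               (\<forall>f\<in>orlicz P. (AE z in P. f z \<ge> 0) \<longrightarrow> Q f \<ge> 0) \<and> Q (\<lambda>_. 1) = 1}
            \<union> empirical"

definition int_fun :: "'a measure \<Rightarrow> ('a \<Rightarrow> real) \<Rightarrow> real" where
  "int_fun P = (\<lambda>f. \<integral>z. f z \<partial>P)"

definition sup_ll :: "(('a \<Rightarrow> real) \<Rightarrow> real) \<Rightarrow> ('t \<Rightarrow> 'a \<Rightarrow> real) \<Rightarrow> 't set \<Rightarrow> ereal" where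
  "sup_ll Q ell \<Theta> = (SUP \<theta>\<in>\<Theta>. ereal (Q (ell \<theta>)))"

text \<open>Lambda_{alpha,K} and Gamma_{alpha,K}.  The condition
  sup_{Theta_K} Q ell - sup_{Theta_{K'}} Q ell >= -alpha  is written
  sup_{Theta_{K'}} Q ell <= sup_{Theta_K} Q ell + alpha  (extended reals).\<close>
definition Lambda_set :: "'a measure \<Rightarrow> (nat \<Rightarrow> 't set) \<Rightarrow> ('t \<Rightarrow> 'a \<Rightarrow> real) \<Rightarrow> real \<Rightarrow> nat
     \<Rightarrow> (('a \<Rightarrow> real) \<Rightarrow> real) set" where
  "Lambda_set P \<Theta> ell \<alpha> K =
     {Q \<in> Qset P. sup_ll Q ell (\<Theta> (Suc K)) \<le> sup_ll Q ell (\<Theta> K) + ereal \<alpha>}"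

definition Gamma_set :: "'a measure \<Rightarrow> (nat \<Rightarrow> 't set) \<Rightarrow> ('t \<Rightarrow> 'a \<Rightarrow> real) \<Rightarrow> nat \<Rightarrow> real \<Rightarrow> nat
     \<Rightarrow> (('a \<Rightarrow> real) \<Rightarrow> real) set" where
  "Gamma_set P \<Theta> ell Ks \<alpha> K =
     {Q \<in> Qset P. sup_ll Q ell (\<Theta> Ks) \<le> sup_ll Q ell (\<Theta> K) + ereal \<alpha>}"

end

theory Submission
  imports Defs
begin

(*
  For theta in Theta_oo let g = exp (ell theta - ell star) be the density of P_theta w.r.t. P star.
  Young's inequality x e^t <= e^x + e^t max 0 t, applied with e^t = g and x = |f| / a, bounds
  |int g f dP star| by (4 + int g log+ g dP star) ||f||_tau, and int g log+ g dP star is finite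
  because H(P_theta|P star) is. So f |-> int f dP_theta belongs to Q, and by Gibbs' inequality
  P_theta ell theta' <= P_theta ell theta it attains its supremum over all of Theta_oo at theta,
  which gives the inequalities defining Lambda_{0,K} and Gamma_{0,K} when theta is in Theta_K.

  On the other side, (A3) makes ell star - ell theta integrable under P star, so
  H(P star|P_theta) = P star ell star - P star ell theta and
  H(P star|Pi_K) = P star ell star - sup_{Theta_K} P star ell theta. Below K star the strict
  decrease of H(P star|Pi_K) is thus a strict increase of sup_{Theta_K} P star ell theta from
  K to K + 1, which violates both defining inequalities.
*)

lemma young_exp:
  fixes x t :: real
  assumes "0 \<le> x"
  shows "x * exp t \<le> exp x + exp t * max 0 t"
proof -
  have "exp t * (1 + (x - t)) \<le> exp t * exp (x - t)"
    using exp_ge_add_one_self[of "x - t"] by (intro mult_left_mono) auto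
  also have "\<dots> = exp x"
    by (simp add: exp_add[symmetric])
  finally have "x * exp t \<le> exp x + exp t * t - exp t"
    by (simp add: algebra_simps)
  moreover have "exp t * t \<le> exp t * max 0 t"
    by (intro mult_left_mono) auto
  ultimately show ?thesis
    using exp_gt_zero[of t] by linarith
qed

lemma mult_exp_minus_le_1:
  fixes t :: real
  shows "t * exp (- t) \<le> 1"
proof -
  have "t \<le> exp t"
    using exp_ge_add_one_self[of t] by linarith
  hence "t * exp (- t) \<le> exp t * exp (- t)"
    by (intro mult_right_mono) auto
  thus ?thesis
    by (simp add: exp_add[symmetric])
qed

lemma tau_nonneg: "0 \<le> tau s"
  unfolding tau_def using exp_ge_add_one_self[of "\<bar>s\<bar>"] by linarith

lemma exp_abs_le_tau: "exp \<bar>s\<bar> \<le> 2 * tau s + 2"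
proof -
  have "exp 1 * \<bar>s\<bar> \<le> exp 1 * exp (\<bar>s\<bar> - 1)"
    using exp_ge_add_one_self[of "\<bar>s\<bar> - 1"] by (intro mult_left_mono) auto
  also have "\<dots> = exp \<bar>s\<bar>"
    by (simp add: exp_add[symmetric])
  finally have "exp 1 * \<bar>s\<bar> \<le> exp \<bar>s\<bar>" .
  moreover have "2 \<le> exp (1::real)"
    using exp_ge_add_one_self[of 1] by simp
  ultimately have "2 * \<bar>s\<bar> \<le> exp \<bar>s\<bar>"
    by (meson abs_ge_zero mult_right_mono order_trans)
  thus ?thesis
    unfolding tau_def by simp
qed

lemma tau_mult_le:
  assumes "0 \<le> c" "c \<le> 1"
  shows "tau (c * s) \<le> c * tau s"
proof -
  have "exp ((1 - c) * 0 + c * \<bar>s\<bar>) \<le> (1 - c) * exp 0 + c * exp \<bar>s\<bar>"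
    using convex_onD[OF exp_convex, of c 0 "\<bar>s\<bar>"] assms by simp
  thus ?thesis
    unfolding tau_def using assms by (simp add: abs_mult algebra_simps)
qed

lemma abs_mult_le_tau:
  fixes g x a :: real
  assumes "0 < g" "0 < a"
  shows "\<bar>g * x\<bar> \<le> a * (2 * tau (x / a) + 2 + g * max 0 (ln g))"
proof -
  have "(\<bar>x\<bar> / a) * g \<le> exp \<bar>x / a\<bar> + g * max 0 (ln g)"
    using young_exp[of "\<bar>x\<bar> / a" "ln g"] assms by simp
  also have "exp \<bar>x / a\<bar> \<le> 2 * tau (x / a) + 2"
    by (rule exp_abs_le_tau)
  finally have "a * ((\<bar>x\<bar> / a) * g) \<le> a * (2 * tau (x / a) + 2 + g * max 0 (ln g))"
    using assms by (intro mult_left_mono) auto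
  thus ?thesis
    using assms by (simp add: abs_mult mult.commute)
qed

lemma integrable_tau_div:
  assumes "f \<in> borel_measurable M" "(\<integral>\<^sup>+ z. ennreal (tau (f z / a)) \<partial>M) < \<infinity>"
  shows "integrable M (\<lambda>z. tau (f z / a))"
proof (rule integrableI_bounded)
  show "(\<lambda>z. tau (f z / a)) \<in> borel_measurable M"
    using assms(1) unfolding tau_def by measurable
qed (use assms(2) in \<open>simp add: tau_nonneg\<close>)

lemma orlicz_ex_scale_le_1:
  assumes "f \<in> orlicz M"
  shows "\<exists>a>0. (\<integral>\<^sup>+ z. ennreal (tau (f z / a)) \<partial>M) \<le> 1"
proof -
  obtain a where a: "a > 0" "(\<integral>\<^sup>+ z. ennreal (tau (f z / a)) \<partial>M) < \<infinity>"
    and fm: "f \<in> borel_measurable M"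
    using assms unfolding orlicz_def by auto
  obtain m where m: "(\<integral>\<^sup>+ z. ennreal (tau (f z / a)) \<partial>M) = ennreal m" "0 \<le> m"
    using a(2) by (cases "\<integral>\<^sup>+ z. ennreal (tau (f z / a)) \<partial>M" rule: ennreal_cases) auto
  \<comment> \<open>by convexity \<open>tau (s / c) \<le> tau s / c\<close>, so the modular at scale \<open>a * c\<close> is at most \<open>m / c \<le> 1\<close>\<close>
  define c where "c = max 1 m"
  have c: "1 \<le> c" "m \<le> c"
    unfolding c_def by simp_all
  have "(\<integral>\<^sup>+ z. ennreal (tau (f z / (a * c))) \<partial>M)
      \<le> (\<integral>\<^sup>+ z. ennreal (1 / c) * ennreal (tau (f z / a)) \<partial>M)"
  proof (rule nn_integral_mono)
    fix z
    have "tau ((1 / c) * (f z / a)) \<le> (1 / c) * tau (f z / a)"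
      using c by (intro tau_mult_le) auto
    thus "ennreal (tau (f z / (a * c))) \<le> ennreal (1 / c) * ennreal (tau (f z / a))"
      using c by (simp add: ennreal_mult''[symmetric] tau_nonneg field_simps)
  qed
  also have "\<dots> = ennreal (1 / c) * ennreal m"
    using fm m(1) unfolding tau_def by (subst nn_integral_cmult) auto
  also have "\<dots> = ennreal (m / c)"
    using c m(2) by (simp add: ennreal_mult''[symmetric])
  also have "\<dots> \<le> 1"
    using c m(2) by (auto simp: field_simps)
  finally have "(\<integral>\<^sup>+ z. ennreal (tau (f z / (a * c))) \<partial>M) \<le> 1" .
  moreover have "0 < a * c"
    using a(1) c by simp
  ultimately show ?thesis
    by blast
qed

lemma abs_integral_mult_le_tau:
  assumes M: "prob_space M"
    and g: "g \<in> borel_measurable M" "\<And>z. 0 < g z"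
    and g_ln: "integrable M (\<lambda>z. g z * max 0 (ln (g z)))"
    and f: "f \<in> borel_measurable M"
    and a: "0 < a" "(\<integral>\<^sup>+ z. ennreal (tau (f z / a)) \<partial>M) < \<infinity>"
  shows "integrable M (\<lambda>z. g z * f z)"
    and "\<bar>\<integral>z. g z * f z \<partial>M\<bar>
           \<le> a * (2 * (\<integral>z. tau (f z / a) \<partial>M) + 2 + (\<integral>z. g z * max 0 (ln (g z)) \<partial>M))"
proof -
  interpret prob_space M by fact
  define B where "B z = a * (2 * tau (f z / a) + 2 + g z * max 0 (ln (g z)))" for z
  have tau_int: "integrable M (\<lambda>z. tau (f z / a))"
    using integrable_tau_div[OF f a(2)] .
  have B_int: "integrable M B"
    unfolding B_def using tau_int g_ln by simp
  have B_bound: "\<bar>g z * f z\<bar> \<le> B z" for z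
    unfolding B_def using abs_mult_le_tau[OF g(2) a(1)] .
  show int: "integrable M (\<lambda>z. g z * f z)"
  proof (rule Bochner_Integration.integrable_bound[OF B_int])
    show "AE z in M. norm (g z * f z) \<le> norm (B z)"
      using B_bound by (intro AE_I2) (metis abs_ge_self order_trans real_norm_def)
  qed (use g f in measurable)
  have "\<bar>\<integral>z. g z * f z \<partial>M\<bar> \<le> (\<integral>z. \<bar>g z * f z\<bar> \<partial>M)"
    using integral_norm_bound[of M "\<lambda>z. g z * f z"] by simp
  also have "\<dots> \<le> (\<integral>z. B z \<partial>M)"
    using int B_int B_bound by (intro integral_mono) auto
  also have "\<dots> = a * (2 * (\<integral>z. tau (f z / a) \<partial>M) + 2 + (\<integral>z. g z * max 0 (ln (g z)) \<partial>M))"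
    unfolding B_def using tau_int g_ln by (simp add: prob_space)
  finally show "\<bar>\<integral>z. g z * f z \<partial>M\<bar>
      \<le> a * (2 * (\<integral>z. tau (f z / a) \<partial>M) + 2 + (\<integral>z. g z * max 0 (ln (g z)) \<partial>M))" .
qed

lemma integrable_mult_orlicz:
  assumes "prob_space M" "g \<in> borel_measurable M" "\<And>z. 0 < g z"
    and "integrable M (\<lambda>z. g z * max 0 (ln (g z)))" "f \<in> orlicz M"
  shows "integrable M (\<lambda>z. g z * f z)"
proof -
  obtain a where "a > 0" "(\<integral>\<^sup>+ z. ennreal (tau (f z / a)) \<partial>M) < \<infinity>" "f \<in> borel_measurable M"
    using assms(5) unfolding orlicz_def by auto
  thus ?thesis
    using abs_integral_mult_le_tau(1) assms by blast
qed

lemma abs_integral_mult_orlicz_le: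
  assumes M: "prob_space M"
    and g: "g \<in> borel_measurable M" "\<And>z. 0 < g z"
    and g_ln: "integrable M (\<lambda>z. g z * max 0 (ln (g z)))"
    and f: "f \<in> orlicz M"
  shows "\<bar>\<integral>z. g z * f z \<partial>M\<bar> \<le> (4 + (\<integral>z. g z * max 0 (ln (g z)) \<partial>M)) * orlicz_norm M f"
proof -
  interpret prob_space M by fact
  define C where "C = 4 + (\<integral>z. g z * max 0 (ln (g z)) \<partial>M)"
  have C: "0 < C"
    unfolding C_def using g(2) by (simp add: add_pos_nonneg less_imp_le)
  have fm: "f \<in> borel_measurable M"
    using f unfolding orlicz_def by simp
  define S where "S = {a. a > 0 \<and> (\<integral>\<^sup>+ z. ennreal (tau (f z / a)) \<partial>M) \<le> 1}"
  have "\<bar>\<integral>z. g z * f z \<partial>M\<bar> / C \<le> Inf S"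
  proof (rule cInf_greatest)
    show "S \<noteq> {}"
      using orlicz_ex_scale_le_1[OF f] unfolding S_def by auto
  next
    fix a assume "a \<in> S"
    hence a: "0 < a" "(\<integral>\<^sup>+ z. ennreal (tau (f z / a)) \<partial>M) \<le> 1"
      unfolding S_def by auto
    hence fin: "(\<integral>\<^sup>+ z. ennreal (tau (f z / a)) \<partial>M) < \<infinity>"
      using le_less_trans[OF a(2) ennreal_one_less_top] by simp
    have "ennreal (\<integral>z. tau (f z / a) \<partial>M) \<le> 1"
      using a(2) integrable_tau_div[OF fm fin]
      by (subst nn_integral_eq_integral[symmetric]) (auto simp: tau_nonneg)
    hence "(\<integral>z. tau (f z / a) \<partial>M) \<le> 1"
      by (simp add: ennreal_le_1)
    hence "a * (2 * (\<integral>z. tau (f z / a) \<partial>M) + 2 + (\<integral>z. g z * max 0 (ln (g z)) \<partial>M)) \<le> a * C"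
      using a(1) unfolding C_def by (intro mult_left_mono) auto
    hence "\<bar>\<integral>z. g z * f z \<partial>M\<bar> \<le> a * C"
      using abs_integral_mult_le_tau(2)[OF M g g_ln fm a(1) fin] by linarith
    thus "\<bar>\<integral>z. g z * f z \<partial>M\<bar> / C \<le> a"
      using C by (simp add: field_simps)
  qed
  thus ?thesis
    using C unfolding C_def S_def orlicz_norm_def by (simp add: field_simps)
qed

lemma density_exp_diff:
  assumes "a \<in> borel_measurable M" "b \<in> borel_measurable M"
  shows "density (density M (\<lambda>z. ennreal (exp (a z)))) (\<lambda>z. ennreal (exp (b z - a z)))
       = density M (\<lambda>z. ennreal (exp (b z)))"
  using assms
  by (subst density_density_eq) (auto intro!: density_cong simp: ennreal_mult[symmetric] mult_exp_exp)

lemma rel_entropy_density_eq: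
  fixes M :: "'a measure" and g :: "'a \<Rightarrow> real"
  defines "N \<equiv> density M (\<lambda>z. ennreal (g z))"
  assumes g: "g \<in> borel_measurable M" "\<And>z. 0 < g z" and N: "prob_space N"
  shows "rel_entropy N M = enn2ereal (\<integral>\<^sup>+ z. ennreal (ln (g z)) \<partial>N)
                            - enn2ereal (\<integral>\<^sup>+ z. ennreal (- ln (g z)) \<partial>N)"
proof -
  have ac: "absolutely_continuous M N"
    unfolding N_def using g by (intro absolutely_continuousI_density) measurable
  have "AE z in M. ennreal (g z) = RN_deriv M N z"
    using g N unfolding N_def
    by (intro RN_deriv_unique_sigma_finite) (auto intro: prob_space_imp_sigma_finite)
  hence "AE z in N. enn2real (RN_deriv M N z) = g z"
    unfolding N_def using g
    by (subst AE_density) (auto elim!: eventually_mono simp: less_imp_le)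
  hence "AE z in N. ln (enn2real (RN_deriv M N z)) = ln (g z)"
    by (auto elim!: eventually_mono)
  hence "(\<integral>\<^sup>+ z. ennreal (ln (enn2real (RN_deriv M N z))) \<partial>N) = (\<integral>\<^sup>+ z. ennreal (ln (g z)) \<partial>N)"
    and "(\<integral>\<^sup>+ z. ennreal (- ln (enn2real (RN_deriv M N z))) \<partial>N) = (\<integral>\<^sup>+ z. ennreal (- ln (g z)) \<partial>N)"
    by (auto intro!: nn_integral_cong_AE elim!: eventually_mono)
  thus ?thesis
    unfolding rel_entropy_def using ac by (simp add: N_def)
qed

lemma rel_entropy_density_eq_integral:
  fixes M :: "'a measure" and g :: "'a \<Rightarrow> real"
  defines "N \<equiv> density M (\<lambda>z. ennreal (g z))"
  assumes "g \<in> borel_measurable M" "\<And>z. 0 < g z" "prob_space N"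
    and "integrable N (\<lambda>z. ln (g z))"
  shows "rel_entropy N M = ereal (\<integral>z. ln (g z) \<partial>N)"
proof -
  obtain r q where "0 \<le> r" "0 \<le> q"
    "(\<integral>\<^sup>+ z. ennreal (ln (g z)) \<partial>N) = ennreal r"
    "(\<integral>\<^sup>+ z. ennreal (- ln (g z)) \<partial>N) = ennreal q"
    "(\<integral>z. ln (g z) \<partial>N) = r - q"
    using integrableE[OF assms(5)] by metis
  thus ?thesis
    using rel_entropy_density_eq[of g M] assms unfolding N_def by simp
qed

lemma rel_entropy_density_exp:
  fixes M :: "'a measure" and a b :: "'a \<Rightarrow> real"
  defines "N \<equiv> density M (\<lambda>z. ennreal (exp (a z)))"
  assumes [measurable]: "a \<in> borel_measurable M" "b \<in> borel_measurable M"
    and N: "prob_space N" and int: "integrable N (\<lambda>z. a z - b z)"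
  shows "rel_entropy N (density M (\<lambda>z. ennreal (exp (b z)))) = ereal (\<integral>z. a z - b z \<partial>N)"
proof -
  have N_eq: "N = density (density M (\<lambda>z. ennreal (exp (b z)))) (\<lambda>z. ennreal (exp (a z - b z)))"
    unfolding N_def by (simp add: density_exp_diff)
  show ?thesis
    using rel_entropy_density_eq_integral[of "\<lambda>z. exp (a z - b z)"] N int
    unfolding N_eq by simp
qed

lemma integrable_pos_ln_if_rel_entropy_finite:
  fixes M :: "'a measure" and g :: "'a \<Rightarrow> real"
  defines "N \<equiv> density M (\<lambda>z. ennreal (g z))"
  assumes M: "prob_space M" and g: "g \<in> borel_measurable M" "\<And>z. 0 < g z"
    and N: "prob_space N" and fin: "rel_entropy N M < \<infinity>"
  shows "integrable M (\<lambda>z. g z * max 0 (ln (g z)))"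
proof -
  interpret prob_space M by fact
  have ennreal_mult_max: "ennreal (g z) * ennreal t = ennreal (g z * max 0 t)" for z t
    using g(2)[of z] by (cases "0 \<le> t") (auto simp: ennreal_mult ennreal_neg)
  have pos_eq: "(\<integral>\<^sup>+ z. ennreal (ln (g z)) \<partial>N) = (\<integral>\<^sup>+ z. ennreal (g z * max 0 (ln (g z))) \<partial>M)"
    and neg_eq: "(\<integral>\<^sup>+ z. ennreal (- ln (g z)) \<partial>N) = (\<integral>\<^sup>+ z. ennreal (g z * max 0 (- ln (g z))) \<partial>M)"
    unfolding N_def using g by (auto simp: nn_integral_density ennreal_mult_max less_imp_le)
  \<comment> \<open>the negative part of the entropy integrand is bounded, as \<open>g ln g \<ge> -1/e\<close>\<close>
  have "g z * max 0 (- ln (g z)) \<le> 1" for z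
  proof (cases "0 \<le> ln (g z)")
    case False
    hence "g z * max 0 (- ln (g z)) = (- ln (g z)) * exp (- (- ln (g z)))"
      using g(2)[of z] by simp
    thus ?thesis
      using mult_exp_minus_le_1 by presburger
  qed simp
  hence "(\<integral>\<^sup>+ z. ennreal (- ln (g z)) \<partial>N) \<le> 1"
    unfolding neg_eq using nn_integral_mono[of M _ "\<lambda>_. 1"] by (simp add: emeasure_space_1)
  hence "(\<integral>\<^sup>+ z. ennreal (- ln (g z)) \<partial>N) \<noteq> \<infinity>"
    by (auto simp: top_unique)
  hence "(\<integral>\<^sup>+ z. ennreal (ln (g z)) \<partial>N) \<noteq> \<infinity>"
    using fin rel_entropy_density_eq[OF g N[unfolded N_def]] unfolding N_def by auto
  then obtain r where "(\<integral>\<^sup>+ z. ennreal (g z * max 0 (ln (g z))) \<partial>M) = ennreal r"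
    unfolding pos_eq by (cases "\<integral>\<^sup>+ z. ennreal (g z * max 0 (ln (g z))) \<partial>M" rule: ennreal_cases) auto
  thus ?thesis
    using g by (intro integrableI_nn_integral_finite) (auto simp: less_imp_le)
qed

lemma gibbs_inequality:
  fixes M :: "'a measure" and a b :: "'a \<Rightarrow> real"
  defines "N \<equiv> density M (\<lambda>z. ennreal (exp (a z)))"
  assumes [measurable]: "a \<in> borel_measurable M" "b \<in> borel_measurable M"
    and N: "prob_space N" and Nb: "prob_space (density M (\<lambda>z. ennreal (exp (b z))))"
    and int_a: "integrable N a" and int_b: "integrable N b"
  shows "(\<integral>z. b z \<partial>N) \<le> (\<integral>z. a z \<partial>N)"
proof -
  interpret N: prob_space N by fact
  define h where "h z = exp (b z - a z)" for z
  have "(\<integral>\<^sup>+ z. ennreal (h z) \<partial>N) = emeasure (density M (\<lambda>z. ennreal (exp (b z)))) (space M)"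
    unfolding h_def N_def density_exp_diff[symmetric, OF assms(2,3)]
    by (subst emeasure_density) (auto intro!: nn_integral_cong)
  also have "\<dots> = 1"
    using prob_space.emeasure_space_1[OF Nb] by simp
  finally have h_nn: "(\<integral>\<^sup>+ z. ennreal (h z) \<partial>N) = 1" .
  have "h \<in> borel_measurable N"
    unfolding h_def N_def by measurable
  hence int_h: "integrable N h"
    using h_nn by (intro integrableI_nn_integral_finite[of _ _ 1]) (auto simp: h_def)
  have "ennreal (\<integral>z. h z \<partial>N) = 1"
    using nn_integral_eq_integral[OF int_h] h_nn by (simp add: h_def[abs_def])
  hence "(\<integral>z. h z \<partial>N) = 1"
    by simp
  \<comment> \<open>\<open>t \<le> exp t - 1\<close> at \<open>t = b - a\<close>\<close>
  have "(\<integral>z. b z - a z \<partial>N) \<le> (\<integral>z. h z - 1 \<partial>N)"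
    using int_a int_b int_h exp_ge_add_one_self[of "b _ - a _"] unfolding h_def
    by (intro integral_mono) (auto simp: algebra_simps)
  also have "\<dots> = 0"
    using int_h \<open>(\<integral>z. h z \<partial>N) = 1\<close> by (simp add: N.prob_space)
  finally show ?thesis
    using int_a int_b by simp
qed

lemma int_fun_density_in_Qset:
  fixes M :: "'a measure" and g :: "'a \<Rightarrow> real"
  defines "N \<equiv> density M (\<lambda>z. ennreal (g z))"
  assumes M: "prob_space M" and g: "g \<in> borel_measurable M" "\<And>z. 0 < g z"
    and g_ln: "integrable M (\<lambda>z. g z * max 0 (ln (g z)))" and N: "prob_space N"
  shows "int_fun N \<in> Qset M"
proof -
  interpret N: prob_space N by fact
  have g_nonneg: "0 \<le> g z" for z
    using g(2) less_imp_le by blast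
  have int_fun_eq: "int_fun N f = (\<integral>z. g z * f z \<partial>M)" if "f \<in> borel_measurable M" for f
    using that g g_nonneg unfolding int_fun_def N_def
    by (subst integral_density) auto
  have orlicz_meas: "f \<in> borel_measurable M" if "f \<in> orlicz M" for f
    using that unfolding orlicz_def by simp
  have int: "integrable M (\<lambda>z. g z * f z)" if "f \<in> orlicz M" for f
    using integrable_mult_orlicz[OF M g g_ln that] .
  have "int_fun N (\<lambda>z. a * f z + b * f' z) = a * int_fun N f + b * int_fun N f'"
    if "f \<in> orlicz M" "f' \<in> orlicz M" for f f' a b
  proof -
    have "(\<lambda>z. a * f z + b * f' z) \<in> borel_measurable M"
      using orlicz_meas[OF that(1)] orlicz_meas[OF that(2)] by measurable
    hence "int_fun N (\<lambda>z. a * f z + b * f' z) = (\<integral>z. a * (g z * f z) + b * (g z * f' z) \<partial>M)"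
      by (subst int_fun_eq) (auto simp: algebra_simps)
    also have "\<dots> = a * (\<integral>z. g z * f z \<partial>M) + b * (\<integral>z. g z * f' z \<partial>M)"
      using int[OF that(1)] int[OF that(2)] by simp
    finally show ?thesis
      using that by (simp add: int_fun_eq orlicz_meas)
  qed
  moreover have "\<bar>int_fun N f\<bar> \<le> (4 + (\<integral>z. g z * max 0 (ln (g z)) \<partial>M)) * orlicz_norm M f"
    if "f \<in> orlicz M" for f
    using abs_integral_mult_orlicz_le[OF M g g_ln that] int_fun_eq[OF orlicz_meas[OF that]] by simp
  moreover have "0 \<le> int_fun N f" if "f \<in> orlicz M" "AE z in M. 0 \<le> f z" for f
    unfolding int_fun_eq[OF orlicz_meas[OF that(1)]] using that(2) g_nonneg
    by (intro integral_nonneg_AE) (auto elim!: eventually_mono)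
  moreover have "int_fun N (\<lambda>_. 1) = 1"
    unfolding int_fun_def by (simp add: N.prob_space)
  ultimately show ?thesis
    unfolding Qset_def orlicz_dual_def by blast
qed

lemma integrable_diff_of_bracketed:
  fixes f h l u :: "'a \<Rightarrow> real"
  assumes "integrable M (\<lambda>z. u z - l z)"
    and "f \<in> borel_measurable M" "h \<in> borel_measurable M"
    and "\<And>z. l z \<le> f z \<and> f z \<le> u z" "\<And>z. l z \<le> h z \<and> h z \<le> u z"
  shows "integrable M (\<lambda>z. f z - h z)"
proof (rule Bochner_Integration.integrable_bound[OF assms(1)])
  show "AE z in M. norm (f z - h z) \<le> norm (u z - l z)"
    using assms(4,5) by (intro AE_I2) (smt (verit) real_norm_def)
qed (use assms(2,3) in measurable)

lemma maximiser_in_Lambda_Gamma: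
  assumes "Q \<in> Qset P" "\<theta> \<in> \<Theta> K"
    and "\<And>\<theta>' J. \<theta>' \<in> \<Theta> J \<Longrightarrow> Q (ell \<theta>') \<le> Q (ell \<theta>)"
  shows "Q \<in> Lambda_set P \<Theta> ell 0 K \<inter> Gamma_set P \<Theta> ell Ks 0 K"
proof -
  have "sup_ll Q ell (\<Theta> J) \<le> sup_ll Q ell (\<Theta> K)" for J
  proof -
    have "sup_ll Q ell (\<Theta> J) \<le> ereal (Q (ell \<theta>))"
      unfolding sup_ll_def using assms(3) by (intro SUP_least) simp
    also have "\<dots> \<le> sup_ll Q ell (\<Theta> K)"
      unfolding sup_ll_def using assms(2) by (intro SUP_upper)
    finally show ?thesis .
  qed
  thus ?thesis
    using assms(1) unfolding Lambda_set_def Gamma_set_def by simp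
qed

lemma notin_Lambda_Gamma_if_sup_ll_less:
  assumes "sup_ll Q ell (\<Theta> K) < sup_ll Q ell (\<Theta> (Suc K))" "\<Theta> (Suc K) \<subseteq> \<Theta> Ks"
  shows "Q \<notin> Lambda_set P \<Theta> ell 0 K \<union> Gamma_set P \<Theta> ell Ks 0 K"
proof -
  have "sup_ll Q ell (\<Theta> (Suc K)) \<le> sup_ll Q ell (\<Theta> Ks)"
    unfolding sup_ll_def using assms(2) by (rule SUP_subset_mono) simp
  thus ?thesis
    using assms(1) unfolding Lambda_set_def Gamma_set_def by auto
qed

locale log_density_models =
  fixes \<mu> :: "'z measure" and ell :: "'t \<Rightarrow> 'z \<Rightarrow> real" and T :: "'t set"
    and ellstar :: "'z \<Rightarrow> real" and Pstar :: "'z measure"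
  assumes ellstar_meas [measurable]: "ellstar \<in> borel_measurable \<mu>"
    and Pstar_def: "Pstar = density \<mu> (\<lambda>z. ennreal (exp (ellstar z)))"
    and Pstar_prob: "prob_space Pstar"
    and ell_meas: "\<theta> \<in> T \<Longrightarrow> ell \<theta> \<in> borel_measurable \<mu>"
    and model_prob: "\<theta> \<in> T \<Longrightarrow> prob_space (model \<mu> ell \<theta>)"
    and entropy_fin: "\<theta> \<in> T \<Longrightarrow> rel_entropy (model \<mu> ell \<theta>) Pstar < \<infinity>"
    and ell_orlicz: "\<theta> \<in> T \<Longrightarrow> ell \<theta> \<in> orlicz Pstar"
    and ell_diff_integrable: "\<theta> \<in> T \<Longrightarrow> integrable Pstar (\<lambda>z. ellstar z - ell \<theta> z)"
begin

definition lr :: "'t \<Rightarrow> 'z \<Rightarrow> real" where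
  "lr \<theta> z = exp (ell \<theta> z - ellstar z)"

lemma lr_pos: "0 < lr \<theta> z"
  unfolding lr_def by simp

lemma lr_measurable: "\<theta> \<in> T \<Longrightarrow> lr \<theta> \<in> borel_measurable Pstar"
  unfolding lr_def Pstar_def using ell_meas by measurable

lemma model_eq_density: "\<theta> \<in> T \<Longrightarrow> model \<mu> ell \<theta> = density Pstar (\<lambda>z. ennreal (lr \<theta> z))"
  unfolding model_def Pstar_def lr_def using density_exp_diff[OF ellstar_meas ell_meas] by simp

lemma integrable_lr_pos_ln:
  "\<theta> \<in> T \<Longrightarrow> integrable Pstar (\<lambda>z. lr \<theta> z * max 0 (ln (lr \<theta> z)))"
  using integrable_pos_ln_if_rel_entropy_finite[OF Pstar_prob lr_measurable lr_pos]
    model_prob entropy_fin by (simp add: model_eq_density)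

lemma int_fun_model_in_Qset: "\<theta> \<in> T \<Longrightarrow> int_fun (model \<mu> ell \<theta>) \<in> Qset Pstar"
  using int_fun_density_in_Qset[OF Pstar_prob lr_measurable lr_pos integrable_lr_pos_ln]
    model_prob by (simp add: model_eq_density)

lemma integrable_model_orlicz:
  assumes "\<theta> \<in> T" "f \<in> orlicz Pstar"
  shows "integrable (model \<mu> ell \<theta>) f"
proof -
  have "integrable Pstar (\<lambda>z. lr \<theta> z * f z)"
    using integrable_mult_orlicz[OF Pstar_prob lr_measurable[OF assms(1)] lr_pos
        integrable_lr_pos_ln[OF assms(1)] assms(2)] .
  moreover have "f \<in> borel_measurable Pstar"
    using assms(2) unfolding orlicz_def by simp
  ultimately show ?thesis
    using lr_measurable[OF assms(1)] lr_pos
    by (simp add: model_eq_density[OF assms(1)] integrable_density less_imp_le)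
qed

lemma int_fun_model_ell_le:
  assumes "\<theta> \<in> T" "\<theta>' \<in> T"
  shows "int_fun (model \<mu> ell \<theta>) (ell \<theta>') \<le> int_fun (model \<mu> ell \<theta>) (ell \<theta>)"
  using gibbs_inequality[OF ell_meas ell_meas model_prob[unfolded model_def] model_prob[unfolded model_def]]
    integrable_model_orlicz[unfolded model_def] ell_orlicz assms
  unfolding int_fun_def model_def by blast

lemma integrable_ell: "\<theta> \<in> T \<Longrightarrow> integrable Pstar (ell \<theta>)"
  using integrable_mult_orlicz[OF Pstar_prob, of "\<lambda>_. 1"] ell_orlicz by simp

lemma rel_entropy_Pstar_model:
  assumes "\<theta> \<in> T"
  shows "rel_entropy Pstar (model \<mu> ell \<theta>)
       = ereal (\<integral>z. ellstar z \<partial>Pstar) - ereal (int_fun Pstar (ell \<theta>))"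
proof -
  have "integrable Pstar ellstar"
    using Bochner_Integration.integrable_add[OF ell_diff_integrable integrable_ell, OF assms assms]
    by simp
  thus ?thesis
    using rel_entropy_density_exp[OF ellstar_meas ell_meas, of \<theta>] assms
      Pstar_prob ell_diff_integrable integrable_ell
    unfolding int_fun_def model_def Pstar_def[symmetric] by simp
qed

lemma rel_entropy_set_Pstar:
  assumes "\<Theta> \<subseteq> T"
  shows "rel_entropy_set Pstar (model_class \<mu> ell \<Theta>)
       = ereal (\<integral>z. ellstar z \<partial>Pstar) - sup_ll (int_fun Pstar) ell \<Theta>"
proof (cases "\<Theta> = {}")
  case True
  thus ?thesis
    unfolding rel_entropy_set_def model_class_def sup_ll_def by (simp add: top_ereal_def bot_ereal_def)
next
  case False
  have "rel_entropy_set Pstar (model_class \<mu> ell \<Theta>)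
      = (INF \<theta>\<in>\<Theta>. ereal (\<integral>z. ellstar z \<partial>Pstar) - ereal (int_fun Pstar (ell \<theta>)))"
    unfolding rel_entropy_set_def model_class_def image_image
    using assms by (intro INF_cong refl rel_entropy_Pstar_model) blast
  also have "\<dots> = ereal (\<integral>z. ellstar z \<partial>Pstar) - sup_ll (int_fun Pstar) ell \<Theta>"
    unfolding sup_ll_def by (intro INF_ereal_minus_right False) simp
  finally show ?thesis .
qed

lemma sup_ll_Pstar_less:
  assumes "\<Theta>\<^sub>1 \<subseteq> T" "\<Theta>\<^sub>2 \<subseteq> T"
    and "rel_entropy_set Pstar (model_class \<mu> ell \<Theta>\<^sub>2) < rel_entropy_set Pstar (model_class \<mu> ell \<Theta>\<^sub>1)"
  shows "sup_ll (int_fun Pstar) ell \<Theta>\<^sub>1 < sup_ll (int_fun Pstar) ell \<Theta>\<^sub>2"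
  using assms(3) unfolding rel_entropy_set_Pstar[OF assms(1)] rel_entropy_set_Pstar[OF assms(2)]
  by (cases "sup_ll (int_fun Pstar) ell \<Theta>\<^sub>1"; cases "sup_ll (int_fun Pstar) ell \<Theta>\<^sub>2") auto

end

theorem lemmaC2:
  fixes \<mu> :: "'z::polish_space measure"
    and \<Theta> :: "nat \<Rightarrow> 't::metric_space set"
    and ell :: "'t \<Rightarrow> 'z \<Rightarrow> real"
    and ellstar l u :: "'z \<Rightarrow> real"
    and Pstar :: "'z measure"
    and Ks :: nat
  assumes sets_mu: "sets \<mu> = sets borel"
    and sigma_fin: "sigma_finite_measure \<mu>"
    and ellstar_meas: "ellstar \<in> borel_measurable \<mu>"
    and Pstar_def: "Pstar = density \<mu> (\<lambda>z. ennreal (exp (ellstar z)))"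
    and Pstar_prob: "prob_space Pstar"
    and Theta0: "\<Theta> 0 = {}"
    and nested: "\<And>K. \<Theta> K \<subseteq> \<Theta> (Suc K)"
    and ell_meas: "\<And>\<theta>. \<theta> \<in> (\<Union>K. \<Theta> K) \<Longrightarrow> ell \<theta> \<in> borel_measurable \<mu>"
    and model_prob: "\<And>\<theta>. \<theta> \<in> (\<Union>K. \<Theta> K) \<Longrightarrow> prob_space (model \<mu> ell \<theta>)"
    and A1_Theta: "\<And>K. compact (\<Theta> K)"
    and A1_Pi: "\<And>K. weakly_compact (model_class \<mu> ell (\<Theta> K))"
    and A2: "\<And>K z. continuous_on (\<Theta> K) (\<lambda>\<theta>. ell \<theta> z)"
    and A3_int: "integrable Pstar (\<lambda>z. u z - l z)"
    and A3_star: "\<And>z. l z \<le> ellstar z \<and> ellstar z \<le> u z"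
    and A3_model: "\<And>\<theta> z. \<theta> \<in> (\<Union>K. \<Theta> K) \<Longrightarrow> l z \<le> ell \<theta> z \<and> ell \<theta> z \<le> u z"
    and Kstar_in: "Pstar \<in> model_class \<mu> ell (\<Theta> Ks)"
    and Kstar_notin: "Pstar \<notin> model_class \<mu> ell (\<Theta> (Ks - 1))"
    and entropy_fin: "\<And>\<theta>. \<theta> \<in> (\<Union>K. \<Theta> K) \<Longrightarrow> rel_entropy (model \<mu> ell \<theta>) Pstar < \<infinity>"
    and plogp_int: "\<And>\<theta>. \<theta> \<in> (\<Union>K. \<Theta> K) \<Longrightarrow> integrable \<mu> (\<lambda>z. exp (ell \<theta> z) * ell \<theta> z)"
    and ell_orlicz: "\<And>\<theta>. \<theta> \<in> (\<Union>K. \<Theta> K) \<Longrightarrow> ell \<theta> \<in> orlicz Pstar"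
    and strict_decr: "\<And>K. K \<ge> 1 \<Longrightarrow> Pstar \<notin> model_class \<mu> ell (\<Theta> K) \<Longrightarrow>
        rel_entropy_set Pstar (model_class \<mu> ell (\<Theta> (Suc K)))
          < rel_entropy_set Pstar (model_class \<mu> ell (\<Theta> K))"
  shows "\<forall>K. 1 \<le> K \<and> K < Ks \<longrightarrow>
           (\<forall>\<theta>\<in>\<Theta> K. int_fun (model \<mu> ell \<theta>)
               \<in> Lambda_set Pstar \<Theta> ell 0 K \<inter> Gamma_set Pstar \<Theta> ell Ks 0 K) \<and>
           int_fun Pstar \<notin> Lambda_set Pstar \<Theta> ell 0 K \<union> Gamma_set Pstar \<Theta> ell Ks 0 K"
proof -
  let ?T = "\<Union>K. \<Theta> K"
  have ell_diff: "integrable Pstar (\<lambda>z. ellstar z - ell \<theta> z)" if "\<theta> \<in> ?T" for \<theta>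
  proof (rule integrable_diff_of_bracketed[OF A3_int])
    show "ellstar \<in> borel_measurable Pstar" "ell \<theta> \<in> borel_measurable Pstar"
      unfolding Pstar_def using ellstar_meas ell_meas[OF that] by simp_all
  qed (use A3_star A3_model[OF that] in blast)+
  interpret log_density_models \<mu> ell ?T ellstar Pstar
    unfolding log_density_models_def
    using ellstar_meas Pstar_def Pstar_prob ell_meas model_prob entropy_fin ell_orlicz ell_diff
    by blast
  have mono: "\<Theta> J \<subseteq> \<Theta> K" if "J \<le> K" for J K
    using lift_Suc_mono_le[of \<Theta>, OF nested that] .
  show ?thesis
  proof (intro allI impI conjI ballI)
    fix K \<theta> assume "\<theta> \<in> \<Theta> K"
    thus "int_fun (model \<mu> ell \<theta>) \<in> Lambda_set Pstar \<Theta> ell 0 K \<inter> Gamma_set Pstar \<Theta> ell Ks 0 K"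
      using int_fun_model_in_Qset int_fun_model_ell_le
      by (intro maximiser_in_Lambda_Gamma) auto
  next
    fix K assume K: "1 \<le> K \<and> K < Ks"
    hence "\<Theta> K \<subseteq> \<Theta> (Ks - 1)"
      by (intro mono) linarith
    hence "Pstar \<notin> model_class \<mu> ell (\<Theta> K)"
      using Kstar_notin unfolding model_class_def by blast
    hence "sup_ll (int_fun Pstar) ell (\<Theta> K) < sup_ll (int_fun Pstar) ell (\<Theta> (Suc K))"
      using K strict_decr by (intro sup_ll_Pstar_less) auto
    thus "int_fun Pstar \<notin> Lambda_set Pstar \<Theta> ell 0 K \<union> Gamma_set Pstar \<Theta> ell Ks 0 K"
      using K mono[of "Suc K" Ks] by (intro notin_Lambda_Gamma_if_sup_ll_less) auto
  qed
qed

end
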